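(* Let $\tau\ge1$ be an integer. A hypergraph $H=(\mathcal{V},\mathcal{E})$ is inherently $\tau$-connected if and only if for every partition $\mathscr{P}$ of $\mathcal{V}$ into nonempty disjoint sets $\mathcal{V}_1,\dots,\mathcal{V}_{|\mathscr{P}|}$, $$\sum_{e\in\mathcal{E}}\big(r(e;\mathscr{P})-1\big)\ge\tau(|\mathscr{P}|-1),$$ where $r(e;\mathscr{P})$ is the number of parts of $\mathscr{P}$ that the hyperedge $e$ intersects.
   Context: Hypergraphs may have repeated hyperedges; each hyperedge is a nonempty subset of $\mathcal{V}$. A multigraph $G=(\mathcal{V},\mathcal{E}_M)$ is induced by the hypergraph $H=(\mathcal{V},\mathcal{E})$ if its edge multiset decomposes as a disjoint union of edge sets of simple graphs $G_e=(e,E_e)$, $e\in\mathcal{E}$, where each $G_e$ is a connected simple graph on the vertex set $e$. $H$ is inherently $\tau$-connected if every multigraph induced by $H$ contains at least $\tau$ edge-disjoint spanning trees. *)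

theory Defs
  imports Main
begin

text \<open>A (multi)graph is given by a set of edge labels X and an endpoint map
  ends :: 'x \<Rightarrow> 'v set (each value a 2-element set of vertices).\<close>

definition adj :: "('x \<Rightarrow> 'v set) \<Rightarrow> 'x set \<Rightarrow> 'v \<Rightarrow> 'v \<Rightarrow> bool" where
  "adj ends X a b \<longleftrightarrow> (\<exists>x\<in>X. ends x = {a, b})"

definition graph_connected :: "'v set \<Rightarrow> ('x \<Rightarrow> 'v set) \<Rightarrow> 'x set \<Rightarrow> bool" where
  "graph_connected V ends X \<longleftrightarrow>
     (\<forall>x\<in>X. ends x \<subseteq> V) \<and> (\<forall>u\<in>V. \<forall>v\<in>V. (adj ends X)\<^sup>*\<^sup>* u v)"

definition acyclic_edges :: "('x \<Rightarrow> 'v set) \<Rightarrow> 'x set \<Rightarrow> bool" where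
  "acyclic_edges ends X \<longleftrightarrow>
     (\<forall>x\<in>X. \<forall>a b. ends x = {a, b} \<longrightarrow> \<not> (adj ends (X - {x}))\<^sup>*\<^sup>* a b)"

definition spanning_tree :: "'v set \<Rightarrow> ('x \<Rightarrow> 'v set) \<Rightarrow> 'x set \<Rightarrow> 'x set \<Rightarrow> bool" where
  "spanning_tree V ends M T \<longleftrightarrow> T \<subseteq> M \<and> graph_connected V ends T \<and> acyclic_edges ends T"

definition has_disjoint_spanning_trees :: "nat \<Rightarrow> 'v set \<Rightarrow> ('x \<Rightarrow> 'v set) \<Rightarrow> 'x set \<Rightarrow> bool" where
  "has_disjoint_spanning_trees \<tau> V ends M \<longleftrightarrow>
     (\<exists>Ts :: nat \<Rightarrow> 'x set. (\<forall>k<\<tau>. spanning_tree V ends M (Ts k)) \<and>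
        (\<forall>k<\<tau>. \<forall>l<\<tau>. k \<noteq> l \<longrightarrow> Ts k \<inter> Ts l = {}))"

definition simple_edges :: "'v set \<Rightarrow> 'v set set" where
  "simple_edges e = {p. \<exists>u v. p = {u, v} \<and> u \<noteq> v \<and> u \<in> e \<and> v \<in> e}"

text \<open>A hypergraph with repeated hyperedges: vertex set V, finite index set I of
  hyperedges, hyperedge map f. Hyperedges are nonempty subsets of V.\<close>
definition hypergraph :: "'v set \<Rightarrow> 'i set \<Rightarrow> ('i \<Rightarrow> 'v set) \<Rightarrow> bool" where
  "hypergraph V I f \<longleftrightarrow> finite V \<and> finite I \<and> (\<forall>i\<in>I. f i \<noteq> {} \<and> f i \<subseteq> V)"

text \<open>An induced multigraph is determined by choosing, for every hyperedge i, a
  connected simple graph G_i = (f i, Es i); its edge multiset is the disjoint union,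
  realised as labelled edges (i, p) with p in Es i and endpoints p.\<close>
definition induced_choice :: "'i set \<Rightarrow> ('i \<Rightarrow> 'v set) \<Rightarrow> ('i \<Rightarrow> 'v set set) \<Rightarrow> bool" where
  "induced_choice I f Es \<longleftrightarrow>
     (\<forall>i\<in>I. Es i \<subseteq> simple_edges (f i) \<and> graph_connected (f i) id (Es i))"

definition inherently_connected :: "nat \<Rightarrow> 'v set \<Rightarrow> 'i set \<Rightarrow> ('i \<Rightarrow> 'v set) \<Rightarrow> bool" where
  "inherently_connected \<tau> V I f \<longleftrightarrow>
     (\<forall>Es. induced_choice I f Es \<longrightarrow>
        has_disjoint_spanning_trees \<tau> V snd (SIGMA i:I. Es i))"

definition is_partition :: "'v set \<Rightarrow> 'v set set \<Rightarrow> bool" where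
  "is_partition V P \<longleftrightarrow> \<Union>P = V \<and> {} \<notin> P \<and> (\<forall>A\<in>P. \<forall>B\<in>P. A \<noteq> B \<longrightarrow> A \<inter> B = {})"

definition parts_met :: "'v set \<Rightarrow> 'v set set \<Rightarrow> nat" where
  "parts_met e P = card {B\<in>P. B \<inter> e \<noteq> {}}"

end

(*
  Both directions reduce to the Nash-Williams--Tutte theorem: a finite multigraph contains \<tau>
  edge-disjoint spanning trees iff every partition P of its vertices is crossed by at least
  \<tau> (|P| - 1) edges. A connected graph on a hyperedge e has at least r(e;P) - 1 edges crossing P,
  and a "star of stars" attains this bound. Hence the condition on H is the Nash-Williams--Tutte
  condition for the induced multigraph with fewest crossing edges, and it implies that condition
  for every induced multigraph.

  For the Nash-Williams--Tutte theorem itself, take \<tau> disjoint forests minimising a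
  lexicographic potential: first the number of unused edges, then, level by level, the number of
  pairs not joined inside a forest, where each level relates the vertices joined in every forest
  by edges inside the previous level. The classes of the stable level form a partition;
  minimality forces every edge between different classes into some forest, since otherwise it
  could be added to a forest or exchanged against a forest edge separating it at its first level.
  Counting the edges inside and across the classes then shows that every forest is a spanning
  tree.
*)

theory Submission
  imports Defs
begin

abbreviation reachable :: "('x \<Rightarrow> 'v set) \<Rightarrow> 'x set \<Rightarrow> 'v \<Rightarrow> 'v \<Rightarrow> bool" where
  "reachable ends X \<equiv> (adj ends X)\<^sup>*\<^sup>*"

definition edges_within :: "'v set \<Rightarrow> ('x \<Rightarrow> 'v set) \<Rightarrow> 'x set \<Rightarrow> bool" where
  "edges_within W ends X \<longleftrightarrow> (\<forall>x\<in>X. \<exists>a b. ends x = {a, b} \<and> a \<in> W \<and> b \<in> W)"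

definition component :: "'v set \<Rightarrow> ('x \<Rightarrow> 'v set) \<Rightarrow> 'x set \<Rightarrow> 'v \<Rightarrow> 'v set" where
  "component W ends X v = {u\<in>W. reachable ends X v u}"

definition num_components :: "'v set \<Rightarrow> ('x \<Rightarrow> 'v set) \<Rightarrow> 'x set \<Rightarrow> nat" where
  "num_components W ends X = card (component W ends X ` W)"

definition crossing :: "('x \<Rightarrow> 'v set) \<Rightarrow> 'v set set \<Rightarrow> 'x \<Rightarrow> bool" where
  "crossing ends P x \<longleftrightarrow> \<not> (\<exists>B\<in>P. ends x \<subseteq> B)"

lemma adj_sym: "adj ends X a b \<Longrightarrow> adj ends X b a"
  unfolding adj_def by (auto simp: insert_commute)

lemma reachable_sym: "reachable ends X a b \<Longrightarrow> reachable ends X b a"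
proof (induction rule: rtranclp_induct)
  case (step y z)
  then show ?case by (meson adj_sym converse_rtranclp_into_rtranclp)
qed simp

lemma reachable_mono: "X \<subseteq> Y \<Longrightarrow> reachable ends X a b \<Longrightarrow> reachable ends Y a b"
proof -
  assume "X \<subseteq> Y"
  then have "adj ends X a b \<Longrightarrow> adj ends Y a b" for a b unfolding adj_def by auto
  then show "reachable ends X a b \<Longrightarrow> reachable ends Y a b" by (metis mono_rtranclp)
qed

lemma reachable_edge: "x \<in> X \<Longrightarrow> ends x = {a, b} \<Longrightarrow> reachable ends X a b"
  unfolding adj_def by (intro r_into_rtranclp) blast

lemma reachable_insert_iff:
  assumes e: "ends e = {a, b}"
  shows "reachable ends (insert e X) u v \<longleftrightarrow> reachable ends X u v
    \<or> (reachable ends X u a \<and> reachable ends X b v) \<or> (reachable ends X u b \<and> reachable ends X a v)"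
    (is "_ \<longleftrightarrow> ?via X u v")
proof
  assume "reachable ends (insert e X) u v"
  then show "?via X u v"
  proof (induction rule: rtranclp_induct)
    case (step w v)
    from step.hyps(2) obtain x where x: "x \<in> insert e X" "ends x = {w, v}"
      unfolding adj_def by auto
    show ?case
    proof (cases "x \<in> X")
      case True
      then have "adj ends X w v" unfolding adj_def using x by auto
      then show ?thesis using step.IH by (meson rtranclp.rtrancl_into_rtrancl)
    next
      case False
      then have "(w = a \<and> v = b) \<or> (w = b \<and> v = a)"
        using x e by (auto simp: doubleton_eq_iff)
      then show ?thesis using step.IH by (metis reachable_sym rtranclp.rtrancl_refl rtranclp_trans)
    qed
  qed simp
next
  have "adj ends (insert e X) a b" "adj ends (insert e X) b a"
    using e unfolding adj_def by (auto simp: insert_commute)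
  moreover have "reachable ends (insert e X) p q" if "reachable ends X p q" for p q
    using that by (rule reachable_mono[rotated]) auto
  ultimately show "?via X u v \<Longrightarrow> reachable ends (insert e X) u v"
    by (meson rtranclp.rtrancl_into_rtrancl rtranclp_trans)
qed

lemma reachable_insert_redundant:
  assumes "ends e = {a, b}" and "reachable ends X a b"
  shows "reachable ends (insert e X) = reachable ends X"
  using reachable_insert_iff[of ends e a b, OF assms(1)] assms(2)
  by (intro ext) (meson reachable_sym rtranclp_trans)

lemma reachable_endpoints_of_needed_edge:
  assumes e: "ends e = {c, d}" and "reachable ends (insert e S) a b" and "\<not> reachable ends S a b"
    and "S \<subseteq> S'" and ab: "reachable ends S' a b"
  shows "reachable ends S' c d"
proof -
  have lift: "reachable ends S' p q" if "reachable ends S p q" for p q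
    using reachable_mono[OF \<open>S \<subseteq> S'\<close> that] .
  from assms(2,3) reachable_insert_iff[of ends e c d, OF e]
  have "(reachable ends S a c \<and> reachable ends S d b) \<or> (reachable ends S a d \<and> reachable ends S c b)"
    by blast
  then show ?thesis
  proof (elim disjE conjE)
    assume "reachable ends S a c" "reachable ends S d b"
    then have "reachable ends S' c a" "reachable ends S' b d" using lift reachable_sym by metis+
    then show ?thesis using ab by (meson rtranclp_trans)
  next
    assume "reachable ends S a d" "reachable ends S c b"
    then have "reachable ends S' d a" "reachable ends S' b c" using lift reachable_sym by metis+
    then show ?thesis using ab by (meson reachable_sym rtranclp_trans)
  qed
qed

lemma reachable_stays_in_part:
  assumes disj: "\<forall>A\<in>P. \<forall>B\<in>P. A \<noteq> B \<longrightarrow> A \<inter> B = {}"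
    and inside: "\<forall>x\<in>S. \<exists>B\<in>P. ends x \<subseteq> B"
    and "reachable ends S u v" "u \<in> B" "B \<in> P"
  shows "v \<in> B"
  using assms(3,4)
proof (induction rule: rtranclp_induct)
  case (step w v)
  then obtain x where x: "x \<in> S" "ends x = {w, v}" unfolding adj_def by auto
  then obtain B' where B': "B' \<in> P" "{w, v} \<subseteq> B'" using inside by metis
  then have "B' = B" using disj step assms(5) by blast
  then show ?case using B' by auto
qed simp

lemma edges_within_subset: "edges_within W ends Y \<Longrightarrow> X \<subseteq> Y \<Longrightarrow> edges_within W ends X"
  unfolding edges_within_def by blast

lemma component_eq: "reachable ends X v u \<Longrightarrow> component W ends X v = component W ends X u"
  unfolding component_def by (meson reachable_sym rtranclp_trans)

lemma mem_component_iff: "u \<in> component W ends X v \<longleftrightarrow> u \<in> W \<and> reachable ends X v u"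
  unfolding component_def by simp

lemma num_components_empty:
  fixes ends :: "'x \<Rightarrow> 'v set"
  shows "num_components W ends {} = card W"
proof -
  have "reachable ends {} v u \<longleftrightarrow> u = v" for u v :: 'v
  proof -
    have "adj ends {} = (\<lambda>_ _. False)" unfolding adj_def by auto
    then show ?thesis by (auto elim: rtranclp.cases)
  qed
  then have "component W ends {} ` W = (\<lambda>v. {v}) ` W" unfolding component_def by auto
  then show ?thesis unfolding num_components_def by (simp add: card_image)
qed

lemma num_components_pos: "finite W \<Longrightarrow> W \<noteq> {} \<Longrightarrow> num_components W ends X \<ge> 1"
  unfolding num_components_def by (simp add: Suc_leI card_gt_0_iff)

lemma num_components_insert_redundant:
  "ends e = {a, b} \<Longrightarrow> reachable ends X a b \<Longrightarrow> num_components W ends (insert e X) = num_components W ends X"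
  unfolding num_components_def component_def by (simp only: reachable_insert_redundant)

lemma component_insert_bridge:
  assumes e: "ends e = {a, b}" and nr: "\<not> reachable ends X a b" and v: "v \<in> W"
  defines "A \<equiv> component W ends X a" and "B \<equiv> component W ends X b"
  shows "component W ends (insert e X) v = (if v \<in> A \<union> B then A \<union> B else component W ends X v)"
proof -
  let ?r = "reachable ends X"
  have ins: "reachable ends (insert e X) v u \<longleftrightarrow> ?r v u \<or> (?r v a \<and> ?r b u) \<or> (?r v b \<and> ?r a u)" for u
    by (rule reachable_insert_iff[of ends e a b, OF e])
  consider "?r v a" | "?r v b" | "\<not> ?r v a" "\<not> ?r v b" by blast
  then show ?thesis
  proof cases
    case 1
    then have "\<not> ?r v b" using nr by (meson reachable_sym rtranclp_trans)
    moreover have "?r v u \<longleftrightarrow> ?r a u" for u using 1 by (meson reachable_sym rtranclp_trans)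
    moreover have "v \<in> A" using 1 v reachable_sym unfolding A_def component_def by fastforce
    ultimately show ?thesis using 1 unfolding A_def B_def component_def ins by auto
  next
    case 2
    then have "\<not> ?r v a" using nr by (meson reachable_sym rtranclp_trans)
    moreover have "?r v u \<longleftrightarrow> ?r b u" for u using 2 by (meson reachable_sym rtranclp_trans)
    moreover have "v \<in> B" using 2 v reachable_sym unfolding B_def component_def by fastforce
    ultimately show ?thesis using 2 unfolding A_def B_def component_def ins by auto
  next
    case 3
    then have "v \<notin> A \<union> B" using reachable_sym unfolding A_def B_def component_def by fastforce
    then show ?thesis using 3 unfolding component_def ins by auto
  qed
qed

lemma components_insert_bridge:
  assumes e: "ends e = {a, b}" and ab: "a \<in> W" "b \<in> W" and nr: "\<not> reachable ends X a b"
  defines "A \<equiv> component W ends X a" and "B \<equiv> component W ends X b"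
  shows "component W ends (insert e X) ` W = insert (A \<union> B) (component W ends X ` W - {A, B})"
proof -
  let ?K = "component W ends X" and ?K' = "component W ends (insert e X)"
  have merged: "?K' v = (if v \<in> A \<union> B then A \<union> B else ?K v)" if "v \<in> W" for v
    using component_insert_bridge[of ends e a b X v W, OF e nr that] unfolding A_def B_def .
  have aA: "a \<in> A" using ab unfolding A_def component_def by auto
  have other: "?K v \<noteq> A \<and> ?K v \<noteq> B" if "v \<in> W" "v \<notin> A \<union> B" for v
    using that by (metis UnCI mem_component_iff rtranclp.rtrancl_refl)
  have in_AB: "?K v \<in> {A, B}" if "v \<in> A \<union> B" for v
    using that unfolding A_def B_def by (metis Un_iff component_eq insertCI mem_component_iff)
  show ?thesis
  proof (intro equalityI subsetI)
    fix C assume "C \<in> ?K' ` W"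
    then obtain v where "v \<in> W" "C = ?K' v" by auto
    then show "C \<in> insert (A \<union> B) (?K ` W - {A, B})" using merged other by (cases "v \<in> A \<union> B") auto
  next
    fix C assume C: "C \<in> insert (A \<union> B) (?K ` W - {A, B})"
    show "C \<in> ?K' ` W"
    proof (cases "C = A \<union> B")
      case True
      then show ?thesis using merged[OF ab(1)] aA ab by (auto intro!: image_eqI[where x=a])
    next
      case False
      then obtain v where "v \<in> W" "C = ?K v" "C \<noteq> A" "C \<noteq> B" using C by auto
      then show ?thesis using merged in_AB[of v] by (intro image_eqI[where x=v]) auto
    qed
  qed
qed

lemma num_components_insert_bridge:
  assumes fin: "finite W" and e: "ends e = {a, b}" and ab: "a \<in> W" "b \<in> W"
    and nr: "\<not> reachable ends X a b"
  shows "num_components W ends X = Suc (num_components W ends (insert e X))"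
proof -
  let ?K = "component W ends X"
  define A where "A = ?K a"
  define B where "B = ?K b"
  have aA: "a \<in> A" and bB: "b \<in> B" using ab unfolding A_def B_def component_def by auto
  have AB: "A \<noteq> B" using bB nr unfolding A_def B_def component_def by auto
  have AB_in: "A \<in> ?K ` W" "B \<in> ?K ` W" using ab unfolding A_def B_def by auto
  have "A \<union> B \<notin> ?K ` W - {A, B}"
  proof
    assume "A \<union> B \<in> ?K ` W - {A, B}"
    then obtain v where "v \<in> W" "A \<union> B = ?K v" "A \<union> B \<noteq> A" by auto
    then have "?K v = A" using aA unfolding A_def by (metis UnCI component_eq mem_component_iff)
    then show False using \<open>A \<union> B = ?K v\<close> \<open>A \<union> B \<noteq> A\<close> by simp
  qed
  moreover have "finite (?K ` W)" using fin by simp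
  moreover have "card {A, B} \<le> card (?K ` W)"
    using AB_in \<open>finite (?K ` W)\<close> by (intro card_mono) auto
  then have "card (?K ` W - {A, B}) + 2 = card (?K ` W)"
    using AB_in AB by (simp add: card_Diff_subset)
  ultimately show ?thesis
    unfolding num_components_def components_insert_bridge[OF e ab nr, folded A_def B_def] by simp
qed

lemma num_components_insert_le:
  assumes "finite W" and "ends e = {a, b}" and "a \<in> W" "b \<in> W"
  shows "num_components W ends X \<le> Suc (num_components W ends (insert e X))"
  using assms num_components_insert_bridge[of W ends e a b, OF assms] num_components_insert_redundant[of ends e a b]
  by (cases "reachable ends X a b") auto

lemma num_components_le_union:
  assumes "finite Y" "finite W" "edges_within W ends Y"
  shows "num_components W ends X \<le> num_components W ends (X \<union> Y) + card Y"
  using assms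
proof (induction Y rule: finite_induct)
  case (insert y Y)
  then obtain a b where ab: "ends y = {a, b}" "a \<in> W" "b \<in> W" unfolding edges_within_def by auto
  have "edges_within W ends Y" using insert.prems unfolding edges_within_def by auto
  then show ?case
    using insert num_components_insert_le[of W ends y a b "X \<union> Y", OF \<open>finite W\<close> ab] by simp
qed simp

lemma acyclic_edges_subset: "acyclic_edges ends X \<Longrightarrow> Y \<subseteq> X \<Longrightarrow> acyclic_edges ends Y"
  unfolding acyclic_edges_def by (meson Diff_mono reachable_mono order_refl subsetD)

lemma num_components_forest:
  assumes "finite X" "finite W" "edges_within W ends X" "acyclic_edges ends X"
  shows "num_components W ends X + card X = card W"
  using assms
proof (induction X rule: finite_induct)
  case (insert x X)
  from insert.prems obtain a b where ab: "ends x = {a, b}" "a \<in> W" "b \<in> W"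
    unfolding edges_within_def by auto
  have "edges_within W ends X" using insert.prems unfolding edges_within_def by auto
  moreover have "acyclic_edges ends X" using acyclic_edges_subset insert.prems(3) by blast
  moreover have "\<not> reachable ends X a b"
    using insert.prems(3) ab(1) insert.hyps unfolding acyclic_edges_def by fastforce
  ultimately show ?case
    using num_components_insert_bridge[of W ends x a b X, OF insert.prems(1) ab] insert by simp
qed (simp add: num_components_empty)

lemma num_components_connected:
  assumes "W \<noteq> {}" "graph_connected W ends X" shows "num_components W ends X = 1"
proof -
  have "component W ends X v = W" if "v \<in> W" for v
    using assms(2) that unfolding graph_connected_def component_def by auto
  then have "component W ends X ` W = {W}" using assms(1) by auto
  then show ?thesis unfolding num_components_def by simp
qed

lemma connected_if_num_components_one:
  assumes "edges_within W ends X" "num_components W ends X = 1"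
  shows "graph_connected W ends X"
proof -
  obtain K where K: "component W ends X ` W = {K}"
    using assms(2) unfolding num_components_def by (meson card_1_singletonE)
  then have "component W ends X u = component W ends X v" if "u \<in> W" "v \<in> W" for u v
    using that by blast
  then have "reachable ends X u v" if "u \<in> W" "v \<in> W" for u v
    using that by (metis mem_component_iff rtranclp.rtrancl_refl)
  moreover have "\<forall>x\<in>X. ends x \<subseteq> W" using assms(1) unfolding edges_within_def by auto
  ultimately show ?thesis unfolding graph_connected_def by auto
qed

lemma card_forest_less:
  assumes "finite W" "W \<noteq> {}" "finite T" "edges_within W ends T" "acyclic_edges ends T"
  shows "card T < card W"
  using num_components_forest[OF assms(3,1,4,5)] num_components_pos[OF assms(1,2), of ends T] by simp

lemma forest_connected_if_card:
  assumes "finite W" "finite T" "edges_within W ends T" "acyclic_edges ends T" "Suc (card T) = card W"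
  shows "graph_connected W ends T"
proof (rule connected_if_num_components_one[OF assms(3)])
  show "num_components W ends T = 1" using num_components_forest[OF assms(2,1,3,4)] assms(5) by linarith
qed

section \<open>Crossing edges of a partition\<close>

text \<open>Distinct parts met by \<open>W\<close> lie in distinct components of the non-crossing edges, and
  each crossing edge reduces the number of components by at most one.\<close>

lemma parts_met_le_crossing_edges:
  assumes fin: "finite W" and ne: "W \<noteq> {}" and finS: "finite S" and S: "edges_within W ends S"
    and conn: "graph_connected W ends S"
    and disj: "\<forall>A\<in>P. \<forall>B\<in>P. A \<noteq> B \<longrightarrow> A \<inter> B = {}" and cov: "W \<subseteq> \<Union>P"
  shows "parts_met W P \<le> card {x\<in>S. crossing ends P x} + 1"
proof -
  define Sin where "Sin = {x\<in>S. \<not> crossing ends P x}"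
  define Sc where "Sc = {x\<in>S. crossing ends P x}"
  have "edges_within W ends Sc" using S unfolding edges_within_def Sc_def by auto
  then have "num_components W ends Sin \<le> num_components W ends (Sin \<union> Sc) + card Sc"
    using finS fin by (intro num_components_le_union) (auto simp: Sc_def)
  also have "Sin \<union> Sc = S" unfolding Sin_def Sc_def by auto
  finally have Sin_le: "num_components W ends Sin \<le> 1 + card Sc"
    using num_components_connected[OF ne conn] by simp
  define rep where "rep B = (SOME v. v \<in> B \<inter> W)" for B
  have rep: "rep B \<in> B \<inter> W" if "B \<inter> W \<noteq> {}" for B
    using that unfolding rep_def by (meson all_not_in_conv someI_ex)
  have inside: "\<forall>x\<in>Sin. \<exists>B\<in>P. ends x \<subseteq> B" unfolding Sin_def crossing_def by auto
  have "inj_on (component W ends Sin \<circ> rep) {B\<in>P. B \<inter> W \<noteq> {}}"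
  proof (rule inj_onI)
    fix B1 B2
    assume B1: "B1 \<in> {B\<in>P. B \<inter> W \<noteq> {}}" and B2: "B2 \<in> {B\<in>P. B \<inter> W \<noteq> {}}"
      and eq: "(component W ends Sin \<circ> rep) B1 = (component W ends Sin \<circ> rep) B2"
    have "rep B2 \<in> component W ends Sin (rep B2)" using rep B2 unfolding component_def by auto
    then have "reachable ends Sin (rep B1) (rep B2)" using eq unfolding component_def by auto
    then have "rep B2 \<in> B1" using reachable_stays_in_part[OF disj inside] rep B1 by blast
    then show "B1 = B2" using rep B1 B2 disj by blast
  qed
  moreover have "(component W ends Sin \<circ> rep) ` {B\<in>P. B \<inter> W \<noteq> {}} \<subseteq> component W ends Sin ` W"
    using rep by auto
  ultimately have "parts_met W P \<le> num_components W ends Sin"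
    unfolding parts_met_def num_components_def using fin by (intro card_inj_on_le) (auto simp: comp_def)
  then show ?thesis using Sin_le unfolding Sc_def by simp
qed

section \<open>Exchanging edges of a forest\<close>

lemma acyclic_insert_bridge:
  assumes ac: "acyclic_edges ends T" and e: "ends e = {a, b}" and nr: "\<not> reachable ends T a b"
  shows "acyclic_edges ends (insert e T)"
  unfolding acyclic_edges_def
proof (intro ballI allI impI notI)
  fix x c d assume x: "x \<in> insert e T" and xcd: "ends x = {c, d}"
    and r: "reachable ends (insert e T - {x}) c d"
  show False
  proof (cases "x = e")
    case True
    then have "reachable ends T c d" using r by (rule_tac reachable_mono[rotated]) auto
    moreover have "(c = a \<and> d = b) \<or> (c = b \<and> d = a)" using True xcd e by (auto simp: doubleton_eq_iff)
    ultimately show False using nr by (metis reachable_sym)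
  next
    case False
    then have xT: "x \<in> T" using x by auto
    have "\<not> reachable ends (T - {x}) c d" using ac xT xcd unfolding acyclic_edges_def by blast
    moreover have "reachable ends (insert e (T - {x})) c d" using r False by (simp add: insert_Diff_if)
    moreover have "reachable ends T c d" using reachable_edge[of x T ends c d, OF xT xcd] .
    ultimately have "reachable ends T a b"
      by (intro reachable_endpoints_of_needed_edge[of ends e a b, OF e]) auto
    with nr show False ..
  qed
qed

text \<open>The path between two vertices of a forest is unique, so every edge that is not on it
  can be deleted, all at once.\<close>

lemma reachable_Diff_non_cut_edges:
  assumes ac: "acyclic_edges ends T" and T: "\<forall>x\<in>T. \<exists>c d. ends x = {c, d}"
    and "finite F" and non_cut: "\<forall>f\<in>F. reachable ends (T - {f}) a b" and "reachable ends T a b"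
  shows "reachable ends (T - F) a b"
  using assms(3-)
proof (induction F rule: finite_induct)
  case (insert f F)
  then have IH: "reachable ends (T - F) a b" by simp
  show ?case
  proof (cases "f \<in> T - F")
    case False
    then have "T - insert f F = T - F" by auto
    then show ?thesis using IH by simp
  next
    case True
    then obtain c d where cd: "ends f = {c, d}" using T by blast
    have nr: "\<not> reachable ends (T - {f}) c d" using ac True cd unfolding acyclic_edges_def by blast
    have "insert f (T - insert f F) = T - F" using True by auto
    then have r: "reachable ends (insert f (T - insert f F)) a b" using IH by simp
    show ?thesis
    proof (rule ccontr)
      assume "\<not> reachable ends (T - insert f F) a b"
      then have "reachable ends (T - {f}) c d"
        using insert.prems by (intro reachable_endpoints_of_needed_edge[of ends f c d, OF cd r]) auto
      with nr show False ..
    qed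
  qed
qed simp

lemma exists_cut_edge_outside:
  assumes "acyclic_edges ends T" and "\<forall>x\<in>T. \<exists>c d. ends x = {c, d}" and "finite T"
    and "reachable ends T a b" and "\<not> reachable ends {x\<in>T. Q x} a b"
  shows "\<exists>f\<in>T. \<not> Q f \<and> \<not> reachable ends (T - {f}) a b"
proof (rule ccontr)
  assume "\<not> ?thesis"
  then have "\<forall>f\<in>{x\<in>T. \<not> Q x}. reachable ends (T - {f}) a b" by blast
  then have "reachable ends (T - {x\<in>T. \<not> Q x}) a b"
    using assms(1-4) by (intro reachable_Diff_non_cut_edges) auto
  moreover have "T - {x\<in>T. \<not> Q x} = {x\<in>T. Q x}" by auto
  ultimately show False using assms(5) by simp
qed

text \<open>Since \<open>f\<close> lies on the unique \<open>a\<close>--\<open>b\<close> path of \<open>T\<close>, a path using \<open>f\<close> can be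
  rerouted through \<open>e\<close>.\<close>

lemma reachable_exchange:
  assumes e: "ends e = {a, b}" and Qe: "Q e" and f: "f \<in> T" "ends f = {c, d}"
    and cut: "\<not> reachable ends (T - {f}) a b" and ab: "reachable ends {x\<in>T. Q x} a b"
  shows "reachable ends {x \<in> insert e (T - {f}). Q x} = reachable ends {x\<in>T. Q x}"
proof (intro ext iffI)
  let ?S = "{x\<in>T. Q x}" and ?S' = "{x \<in> insert e (T - {f}). Q x}"
  fix u v
  {
    assume "reachable ends ?S' u v"
    then have "reachable ends (insert e ?S) u v" by (rule reachable_mono[rotated]) auto
    then show "reachable ends ?S u v" using reachable_insert_redundant[of ends e a b, OF e ab] by simp
  }
  assume uv: "reachable ends ?S u v"
  have cd: "reachable ends ?S' c d" if Qf: "Q f"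
  proof -
    have "insert f (?S - {f}) = ?S" using Qf f(1) by auto
    then have "reachable ends (insert f (?S - {f})) a b" using ab by simp
    moreover have "\<not> reachable ends (?S - {f}) a b"
    proof
      assume "reachable ends (?S - {f}) a b"
      then have "reachable ends (T - {f}) a b" by (rule reachable_mono[rotated]) auto
      with cut show False ..
    qed
    moreover have "reachable ends ?S' a b" using reachable_edge[of e ?S' ends a b] e Qe by simp
    ultimately show ?thesis
      by (intro reachable_endpoints_of_needed_edge[of ends f c d "?S - {f}" a b ?S', OF f(2)]) auto
  qed
  show "reachable ends ?S' u v"
  proof (cases "Q f")
    case True
    have "?S \<subseteq> insert f ?S'" by auto
    then have "reachable ends (insert f ?S') u v" using uv by (rule reachable_mono)
    then show ?thesis
      using reachable_insert_redundant[of ends f c d, OF f(2) cd[OF True]] by simp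
  next
    case False
    then have "?S \<subseteq> ?S'" by auto
    then show ?thesis using uv by (rule reachable_mono)
  qed
qed

section \<open>The refinement sequence of a forest packing\<close>

definition edges_inside :: "('x \<Rightarrow> 'v set) \<Rightarrow> ('v \<Rightarrow> 'v \<Rightarrow> bool) \<Rightarrow> 'x set \<Rightarrow> 'x set" where
  "edges_inside ends R X = {x\<in>X. \<exists>c d. ends x = {c, d} \<and> R c d}"

fun refinement :: "'v set \<Rightarrow> ('x \<Rightarrow> 'v set) \<Rightarrow> nat \<Rightarrow> (nat \<Rightarrow> 'x set) \<Rightarrow> nat \<Rightarrow> 'v \<Rightarrow> 'v \<Rightarrow> bool" where
  "refinement V ends \<tau> Ts 0 = (\<lambda>u v. u \<in> V \<and> v \<in> V)"
| "refinement V ends \<tau> Ts (Suc j) = (\<lambda>u v. u \<in> V \<and> v \<in> V \<and>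
     (\<forall>l<\<tau>. reachable ends (edges_inside ends (refinement V ends \<tau> Ts j) (Ts l)) u v))"

lemma reachable_edges_inside_imp:
  assumes sym: "\<And>p q. R p q \<Longrightarrow> R q p" and trans: "\<And>p q r. R p q \<Longrightarrow> R q r \<Longrightarrow> R p r"
    and "reachable ends (edges_inside ends R X) u v"
  shows "u = v \<or> R u v"
  using assms(3)
proof (induction rule: rtranclp_induct)
  case (step w v)
  then obtain x c d where "ends x = {w, v}" "ends x = {c, d}" "R c d"
    unfolding adj_def edges_inside_def by auto
  then have "R w v" using sym by (auto simp: doubleton_eq_iff)
  then show ?case using step.IH trans by blast
qed simp

lemma refinement_cong:
  assumes "\<forall>j'<j. \<forall>l<\<tau>. reachable ends (edges_inside ends (refinement V ends \<tau> Ts j') (Ts' l))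
                        = reachable ends (edges_inside ends (refinement V ends \<tau> Ts j') (Ts l))"
  shows "refinement V ends \<tau> Ts' j = refinement V ends \<tau> Ts j"
  using assms
proof (induction j)
  case (Suc j)
  then have "refinement V ends \<tau> Ts' j = refinement V ends \<tau> Ts j" by simp
  with Suc.prems show ?case by (auto intro!: ext)
qed simp

lemma lex_Cons_less: "h' < h \<Longrightarrow> length xs = length ys \<Longrightarrow> (h' # xs, h # ys) \<in> lex less_than"
  unfolding lex_conv by (auto intro!: exI[of _ "[]"])

lemma lex_Cons_map_less:
  assumes "j < n" "\<forall>j'<j. c' j' = c j'" "c' j < c j"
  shows "(h # map c' [0..<n], h # map c [0..<n]) \<in> lex less_than"
proof -
  have split: "[0..<n] = [0..<j] @ j # [Suc j..<n]"
    using assms(1) upt_add_eq_append[of 0 j "n - j"] upt_conv_Cons[of j n] by simp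
  have "map c' [0..<j] = map c [0..<j]" using assms(2) by simp
  then show ?thesis unfolding lex_conv split using assms(3)
    by (auto intro!: exI[of _ "h # map c [0..<j]"])
qed

locale forest_packing_setup =
  fixes V :: "'v set" and ends :: "'x \<Rightarrow> 'v set" and M :: "'x set" and \<tau> :: nat
  assumes finite_V: "finite V" and finite_M: "finite M" and edges_M: "edges_within V ends M"
    and tau_pos: "\<tau> \<ge> 1"
begin

abbreviation R :: "(nat \<Rightarrow> 'x set) \<Rightarrow> nat \<Rightarrow> 'v \<Rightarrow> 'v \<Rightarrow> bool" where
  "R Ts j \<equiv> refinement V ends \<tau> Ts j"

lemma refinement_in_V: "R Ts j u v \<Longrightarrow> u \<in> V \<and> v \<in> V"
  by (cases j) auto

lemma refinement_refl: "u \<in> V \<Longrightarrow> R Ts j u u"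
  by (cases j) auto

lemma refinement_sym:
  assumes "R Ts j u v" shows "R Ts j v u"
proof (cases j)
  case (Suc k)
  have "reachable ends (edges_inside ends (R Ts k) (Ts l)) v u" if "l < \<tau>" for l
    using reachable_sym[of ends "edges_inside ends (R Ts k) (Ts l)" u v] assms Suc that by simp
  then show ?thesis using assms Suc by simp
qed (use assms in simp)

lemma refinement_trans: "R Ts j u v \<Longrightarrow> R Ts j v w \<Longrightarrow> R Ts j u w"
  by (cases j) (simp_all, meson rtranclp_trans)

lemma refinement_Suc_imp:
  assumes "R Ts (Suc j) u v" shows "R Ts j u v"
proof -
  have "u \<in> V" and reach: "reachable ends (edges_inside ends (R Ts j) (Ts 0)) u v"
    using assms tau_pos by auto
  have "u = v \<or> R Ts j u v"
  proof (rule reachable_edges_inside_imp[OF _ _ reach])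
    show "R Ts j p q \<Longrightarrow> R Ts j q p" for p q by (rule refinement_sym)
    show "R Ts j p q \<Longrightarrow> R Ts j q r \<Longrightarrow> R Ts j p r" for p q r by (rule refinement_trans)
  qed
  then show ?thesis using \<open>u \<in> V\<close> refinement_refl by auto
qed

lemma refinement_stable_from: "R Ts j = R Ts (Suc j) \<Longrightarrow> j \<le> k \<Longrightarrow> R Ts k = R Ts (Suc k)"
proof (induction k)
  case (Suc k)
  then show ?case by (metis le_Suc_eq refinement.simps(2))
qed simp

definition depth :: nat where "depth = card V * card V"

text \<open>The levels are decreasing subsets of \<open>V \<times> V\<close>, so they cannot keep shrinking
  for more than \<open>card V * card V\<close> steps.\<close>

lemma refinement_stable: "R Ts depth = R Ts (Suc depth)"
proof (rule ccontr)
  assume unstable: "R Ts depth \<noteq> R Ts (Suc depth)"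
  define S where "S j = {(u, v). R Ts j u v}" for j
  have "S j \<subseteq> V \<times> V" for j unfolding S_def using refinement_in_V by auto
  then have fin: "finite (S j)" for j using finite_V by (meson finite_SigmaI rev_finite_subset)
  have "card (S j) + j \<le> depth" if "j \<le> Suc depth" for j
    using that
  proof (induction j)
    case 0
    have "S 0 = V \<times> V" unfolding S_def by auto
    then show ?case unfolding depth_def by (simp add: card_cartesian_product)
  next
    case (Suc j)
    have "S (Suc j) \<subseteq> S j" unfolding S_def using refinement_Suc_imp by auto
    moreover have "S (Suc j) \<noteq> S j"
    proof
      assume "S (Suc j) = S j"
      then have "R Ts j = R Ts (Suc j)" unfolding S_def by (auto simp: fun_eq_iff)
      then show False using refinement_stable_from[of Ts j depth] unstable Suc.prems by simp
    qed
    ultimately have "card (S (Suc j)) < card (S j)" using fin by (meson psubset_card_mono psubsetI)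
    then show ?case using Suc by simp
  qed
  from this[of "Suc depth"] show False by simp
qed

section \<open>Potential-minimal forest packings\<close>

definition forest_packing :: "(nat \<Rightarrow> 'x set) \<Rightarrow> bool" where
  "forest_packing Ts \<longleftrightarrow> (\<forall>l<\<tau>. Ts l \<subseteq> M \<and> acyclic_edges ends (Ts l))
     \<and> (\<forall>k<\<tau>. \<forall>l<\<tau>. k \<noteq> l \<longrightarrow> Ts k \<inter> Ts l = {})"

definition packed_edges :: "(nat \<Rightarrow> 'x set) \<Rightarrow> 'x set" where
  "packed_edges Ts = (\<Union>l<\<tau>. Ts l)"

definition unjoined_count :: "(nat \<Rightarrow> 'x set) \<Rightarrow> nat \<Rightarrow> nat" where
  "unjoined_count Ts j = card {(l, u, v). l < \<tau> \<and> u \<in> V \<and> v \<in> V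
     \<and> \<not> reachable ends (edges_inside ends (R Ts j) (Ts l)) u v}"

definition potential :: "(nat \<Rightarrow> 'x set) \<Rightarrow> nat list" where
  "potential Ts = (card M - card (packed_edges Ts)) # map (unjoined_count Ts) [0..<depth]"

definition minimal_packing :: "(nat \<Rightarrow> 'x set) \<Rightarrow> bool" where
  "minimal_packing Ts \<longleftrightarrow> forest_packing Ts
     \<and> (\<forall>Ts'. forest_packing Ts' \<longrightarrow> (potential Ts', potential Ts) \<notin> lex less_than)"

lemma minimal_packing_exists: "\<exists>Ts. minimal_packing Ts"
proof -
  have "forest_packing (\<lambda>_. {})" unfolding forest_packing_def acyclic_edges_def by auto
  moreover have "wf (inv_image (lex less_than) potential)" by (intro wf_inv_image wf_lex wf_less_than)
  ultimately show ?thesis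
    unfolding minimal_packing_def by (metis (mono_tags) in_inv_image mem_Collect_eq wfE_min)
qed

lemma edge_of_M: "x \<in> M \<Longrightarrow> \<exists>c d. ends x = {c, d} \<and> c \<in> V \<and> d \<in> V"
  using edges_M unfolding edges_within_def by auto

lemma forest_packing_edges:
  "forest_packing Ts \<Longrightarrow> l < \<tau> \<Longrightarrow> \<forall>x\<in>Ts l. \<exists>c d. ends x = {c, d}"
  unfolding forest_packing_def by (meson edge_of_M subsetD)

lemma finite_packed_edges: "forest_packing Ts \<Longrightarrow> finite (packed_edges Ts)"
  unfolding forest_packing_def packed_edges_def using finite_M by (auto intro: rev_finite_subset)

lemma forest_packing_replace:
  assumes Ts: "forest_packing Ts" and i: "i < \<tau>" and x: "x \<in> M" "x \<notin> packed_edges Ts"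
    and acyclic: "acyclic_edges ends (insert x (Ts i - F))"
  shows "forest_packing (Ts(i := insert x (Ts i - F)))"
  using Ts x acyclic unfolding forest_packing_def packed_edges_def by (auto 4 3)

lemma potential_less_insert:
  assumes Ts: "forest_packing Ts" and i: "i < \<tau>" and x: "x \<in> M" "x \<notin> packed_edges Ts"
  shows "(potential (Ts(i := insert x (Ts i))), potential Ts) \<in> lex less_than"
proof -
  let ?Ts' = "Ts(i := insert x (Ts i))"
  have packed: "packed_edges ?Ts' = insert x (packed_edges Ts)"
    unfolding packed_edges_def using i by auto
  moreover have "packed_edges ?Ts' \<subseteq> M"
    using Ts x(1) unfolding packed forest_packing_def packed_edges_def by auto
  then have "card (packed_edges ?Ts') \<le> card M" using finite_M by (rule card_mono[rotated])
  ultimately show ?thesis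
    unfolding potential_def using x(2) finite_packed_edges[OF Ts] by (intro lex_Cons_less) auto
qed

lemma card_packed_edges_exchange:
  assumes Ts: "forest_packing Ts" and i: "i < \<tau>" and x: "x \<notin> packed_edges Ts" and f: "f \<in> Ts i"
  shows "card (packed_edges (Ts(i := insert x (Ts i - {f})))) = card (packed_edges Ts)"
proof -
  have "f \<notin> Ts l" if "l < \<tau>" "l \<noteq> i" for l
    using Ts f i that unfolding forest_packing_def by blast
  then have "packed_edges (Ts(i := insert x (Ts i - {f}))) = insert x (packed_edges Ts - {f})"
    unfolding packed_edges_def using i by auto
  moreover have "f \<in> packed_edges Ts" using f i unfolding packed_edges_def by blast
  ultimately show ?thesis
    using finite_packed_edges[OF Ts] x
    by (simp add: card_insert_disjoint card_Suc_Diff1 del: card_Diff_insert)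
qed

lemma reachable_edges_inside_exchange:
  assumes Ts: "forest_packing Ts" and i: "i < \<tau>" and x: "ends x = {a, b}" "R Ts j a b"
    and f: "f \<in> Ts i" and cut: "\<not> reachable ends (Ts i - {f}) a b"
    and ab: "reachable ends (edges_inside ends (R Ts j) (Ts i)) a b"
  shows "reachable ends (edges_inside ends (R Ts j) ((Ts(i := insert x (Ts i - {f}))) l))
       = reachable ends (edges_inside ends (R Ts j) (Ts l))"
proof (cases "l = i")
  case True
  obtain c d where "ends f = {c, d}" using forest_packing_edges[OF Ts i] f by blast
  moreover have "\<exists>c d. ends x = {c, d} \<and> R Ts j c d" using x by blast
  ultimately show ?thesis
    using reachable_exchange[OF x(1) _ f _ cut ab[unfolded edges_inside_def]] True
    unfolding edges_inside_def by simp
qed simp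

lemma unjoined_count_less:
  assumes same: "R Ts' j = R Ts j"
    and mono: "\<forall>l<\<tau>. edges_inside ends (R Ts j) (Ts l) \<subseteq> edges_inside ends (R Ts j) (Ts' l)"
    and i: "i < \<tau>" and ab: "a \<in> V" "b \<in> V"
    and before: "\<not> reachable ends (edges_inside ends (R Ts j) (Ts i)) a b"
    and after: "reachable ends (edges_inside ends (R Ts j) (Ts' i)) a b"
  shows "unjoined_count Ts' j < unjoined_count Ts j"
proof -
  let ?U = "\<lambda>Ts. {(l, u, v). l < \<tau> \<and> u \<in> V \<and> v \<in> V
     \<and> \<not> reachable ends (edges_inside ends (R Ts j) (Ts l)) u v}"
  have "reachable ends (edges_inside ends (R Ts j) (Ts' l)) u v"
    if "l < \<tau>" "reachable ends (edges_inside ends (R Ts j) (Ts l)) u v" for l u v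
    using reachable_mono[OF mono[rule_format, OF that(1)] that(2)] .
  then have sub: "?U Ts' \<subseteq> ?U Ts" unfolding same by blast
  have "(i, a, b) \<in> ?U Ts" "(i, a, b) \<notin> ?U Ts'" using i ab before after same by auto
  then have "?U Ts' \<noteq> ?U Ts" by metis
  moreover have "finite (?U Ts)"
    by (rule finite_subset[of _ "{..<\<tau>} \<times> V \<times> V"]) (auto simp: finite_V)
  ultimately show ?thesis unfolding unjoined_count_def using sub by (simp add: psubset_card_mono)
qed

lemma potential_less_exchange:
  assumes Ts: "forest_packing Ts" and i: "i < \<tau>"
    and x: "x \<in> M" "x \<notin> packed_edges Ts" "ends x = {a, b}"
    and f: "f \<in> Ts i" "f \<notin> edges_inside ends (R Ts j) (Ts i)"
    and cut: "\<not> reachable ends (Ts i - {f}) a b" and j: "j < depth" and ab: "\<forall>j'\<le>j. R Ts j' a b"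
    and nr: "\<not> reachable ends (edges_inside ends (R Ts j) (Ts i)) a b"
  shows "(potential (Ts(i := insert x (Ts i - {f}))), potential Ts) \<in> lex less_than"
proof -
  define Ts' where "Ts' = Ts(i := insert x (Ts i - {f}))"
  have lower: "reachable ends (edges_inside ends (R Ts j') (Ts' l))
             = reachable ends (edges_inside ends (R Ts j') (Ts l))" if "j' < j" for j' l
    unfolding Ts'_def
  proof (rule reachable_edges_inside_exchange[OF Ts i x(3) _ f(1) cut])
    show "R Ts j' a b" using ab that by simp
    have "R Ts (Suc j') a b" using ab Suc_leI[OF that] by blast
    then show "reachable ends (edges_inside ends (R Ts j') (Ts i)) a b" using i by simp
  qed
  have same: "R Ts' j' = R Ts j'" if "j' \<le> j" for j'
    by (rule refinement_cong) (use lower that in simp)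
  have head: "card (packed_edges Ts') = card (packed_edges Ts)"
    unfolding Ts'_def using Ts i x(2) f(1) by (rule card_packed_edges_exchange)
  have lower_counts: "unjoined_count Ts' j' = unjoined_count Ts j'" if "j' < j" for j'
    unfolding unjoined_count_def using same[of j'] lower[OF that] that by simp
  have count_j: "unjoined_count Ts' j < unjoined_count Ts j"
  proof (rule unjoined_count_less[OF same[OF order_refl] _ i _ _ nr])
    have "\<exists>c d. ends x = {c, d} \<and> R Ts j c d" using x(3) ab by blast
    then have inside:
      "edges_inside ends (R Ts j) (Ts' i) = insert x (edges_inside ends (R Ts j) (Ts i))"
      using f(2) unfolding Ts'_def edges_inside_def by auto
    then show "\<forall>l<\<tau>. edges_inside ends (R Ts j) (Ts l) \<subseteq> edges_inside ends (R Ts j) (Ts' l)"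
      unfolding Ts'_def by auto
    show "reachable ends (edges_inside ends (R Ts j) (Ts' i)) a b"
      unfolding inside by (rule reachable_edge[of x _ ends a b]) (auto simp: x(3))
    show "a \<in> V" "b \<in> V" using ab refinement_in_V by blast+
  qed
  show ?thesis unfolding Ts'_def[symmetric] potential_def head
    by (rule lex_Cons_map_less[OF j]) (use lower_counts count_j in auto)
qed

lemma minimal_packing_packs_separating_edges:
  assumes min: "minimal_packing Ts" and x: "x \<in> M" "ends x = {a, b}" and sep: "\<not> R Ts depth a b"
  shows "x \<in> packed_edges Ts"
proof (rule ccontr)
  assume unpacked: "x \<notin> packed_edges Ts"
  have Ts: "forest_packing Ts" using min unfolding minimal_packing_def by simp
  have "a \<in> V" "b \<in> V" using edge_of_M[OF x(1)] x(2) by (auto simp: doubleton_eq_iff)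
  then obtain j where j: "j < depth" and ab: "\<forall>j'\<le>j. R Ts j' a b" and "\<not> R Ts (Suc j) a b"
    using ex_least_nat_less[of "\<lambda>j. \<not> R Ts j a b", OF sep] by auto
  then obtain i where i: "i < \<tau>" and nr: "\<not> reachable ends (edges_inside ends (R Ts j) (Ts i)) a b"
    using \<open>a \<in> V\<close> \<open>b \<in> V\<close> by auto
  have acyclic: "acyclic_edges ends (Ts i)" and "Ts i \<subseteq> M"
    using Ts i unfolding forest_packing_def by auto
  then have "finite (Ts i)" using finite_M by (rule_tac rev_finite_subset)
  have "\<exists>Ts'. forest_packing Ts' \<and> (potential Ts', potential Ts) \<in> lex less_than"
  proof (cases "reachable ends (Ts i) a b")
    case False
    then have "acyclic_edges ends (insert x (Ts i - {}))"
      using acyclic_insert_bridge[OF acyclic x(2)] by simp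
    from forest_packing_replace[OF Ts i x(1) unpacked this]
    have "forest_packing (Ts(i := insert x (Ts i)))" by simp
    then show ?thesis using potential_less_insert[OF Ts i x(1) unpacked] by blast
  next
    case True
    obtain f where f: "f \<in> Ts i" "f \<notin> edges_inside ends (R Ts j) (Ts i)"
      "\<not> reachable ends (Ts i - {f}) a b"
      using exists_cut_edge_outside[OF acyclic forest_packing_edges[OF Ts i] \<open>finite (Ts i)\<close> True
          nr[unfolded edges_inside_def]]
      unfolding edges_inside_def by blast
    have "acyclic_edges ends (insert x (Ts i - {f}))"
      using acyclic_insert_bridge[OF acyclic_edges_subset[OF acyclic] x(2) f(3)] by blast
    then show ?thesis
      using forest_packing_replace[OF Ts i x(1) unpacked]
        potential_less_exchange[OF Ts i x(1) unpacked x(2) f(1,2) f(3) j ab nr] by blast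
  qed
  then show False using min unfolding minimal_packing_def by blast
qed

definition final_classes :: "(nat \<Rightarrow> 'x set) \<Rightarrow> 'v set set" where
  "final_classes Ts = (\<lambda>v. {u\<in>V. R Ts depth v u}) ` V"

lemma final_classes_partition: "is_partition V (final_classes Ts)"
  unfolding is_partition_def
proof (intro conjI ballI impI)
  show "\<Union>(final_classes Ts) = V" "{} \<notin> final_classes Ts"
    unfolding final_classes_def using refinement_refl by auto
next
  fix A B assume "A \<in> final_classes Ts" "B \<in> final_classes Ts" "A \<noteq> B"
  then show "A \<inter> B = {}"
    unfolding final_classes_def by (auto dest: refinement_sym intro: refinement_trans)
qed

lemma crossing_final_classes_iff:
  assumes "x \<in> M" "ends x = {a, b}"
  shows "crossing ends (final_classes Ts) x \<longleftrightarrow> \<not> R Ts depth a b"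
proof -
  have "a \<in> V" "b \<in> V" using edge_of_M[OF assms(1)] assms(2) by (auto simp: doubleton_eq_iff)
  then show ?thesis
    unfolding crossing_def final_classes_def assms(2)
    by (auto intro: refinement_refl refinement_trans dest: refinement_sym)
qed

lemma edges_inside_final_classes:
  assumes "X \<subseteq> M"
  shows "edges_inside ends (R Ts depth) X = {x\<in>X. \<not> crossing ends (final_classes Ts) x}"
proof -
  have "(\<exists>c d. ends x = {c, d} \<and> R Ts depth c d) \<longleftrightarrow> \<not> crossing ends (final_classes Ts) x"
    if "x \<in> M" for x
  proof -
    from edge_of_M[OF that] obtain a b where ab: "ends x = {a, b}" by blast
    then have "(\<exists>c d. ends x = {c, d} \<and> R Ts depth c d) \<longleftrightarrow> R Ts depth a b"
      by (auto simp: doubleton_eq_iff intro: refinement_sym)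
    then show ?thesis using crossing_final_classes_iff[OF that ab] by simp
  qed
  then show ?thesis unfolding edges_inside_def using assms by auto
qed

text \<open>Since the refinement has stabilised, the components of the edges of a forest inside the
  final relation are exactly the final classes.\<close>

lemma card_edges_inside_final:
  assumes Ts: "forest_packing Ts" and l: "l < \<tau>"
  shows "card (edges_inside ends (R Ts depth) (Ts l)) + card (final_classes Ts) = card V"
proof -
  let ?X = "edges_inside ends (R Ts depth) (Ts l)"
  have "?X \<subseteq> Ts l" unfolding edges_inside_def by auto
  then have "?X \<subseteq> M" and acyclic: "acyclic_edges ends ?X"
    using Ts l acyclic_edges_subset unfolding forest_packing_def by blast+
  then have "finite ?X" "edges_within V ends ?X"
    using finite_M edges_M unfolding edges_within_def by (auto intro: rev_finite_subset)
  have "reachable ends ?X v u \<longleftrightarrow> R Ts depth v u" if "u \<in> V" for u v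
  proof
    assume "reachable ends ?X v u"
    then have "v = u \<or> R Ts depth v u"
      by (rule reachable_edges_inside_imp[rotated 2]) (fact refinement_sym refinement_trans)+
    then show "R Ts depth v u" using refinement_refl that by auto
  next
    assume "R Ts depth v u"
    then have "R Ts (Suc depth) v u" by (simp only: refinement_stable)
    then show "reachable ends ?X v u" using l by simp
  qed
  then have "component V ends ?X ` V = final_classes Ts"
    unfolding component_def final_classes_def by auto
  then show ?thesis
    using num_components_forest[OF \<open>finite ?X\<close> finite_V \<open>edges_within V ends ?X\<close> acyclic]
    unfolding num_components_def by simp
qed

lemma sum_crossing_minimal_packing:
  assumes min: "minimal_packing Ts"
  shows "(\<Sum>l<\<tau>. card {x\<in>Ts l. crossing ends (final_classes Ts) x})
       = card {x\<in>M. crossing ends (final_classes Ts) x}"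
proof -
  let ?C = "crossing ends (final_classes Ts)"
  have Ts: "forest_packing Ts" using min unfolding minimal_packing_def by simp
  then have "finite (Ts l)" if "l < \<tau>" for l
    using that finite_M unfolding forest_packing_def by (auto intro: rev_finite_subset)
  moreover have "\<forall>k<\<tau>. \<forall>l<\<tau>. k \<noteq> l \<longrightarrow> Ts k \<inter> Ts l = {}"
    using Ts unfolding forest_packing_def by blast
  ultimately have "(\<Sum>l<\<tau>. card {x\<in>Ts l. ?C x}) = card (\<Union>l<\<tau>. {x\<in>Ts l. ?C x})"
    by (intro card_UN_disjoint[symmetric]) auto
  also have "(\<Union>l<\<tau>. {x\<in>Ts l. ?C x}) = {x\<in>M. ?C x}"
  proof
    show "(\<Union>l<\<tau>. {x\<in>Ts l. ?C x}) \<subseteq> {x\<in>M. ?C x}"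
      using Ts unfolding forest_packing_def by auto
    show "{x\<in>M. ?C x} \<subseteq> (\<Union>l<\<tau>. {x\<in>Ts l. ?C x})"
    proof
      fix x assume x: "x \<in> {x\<in>M. ?C x}"
      then obtain a b where "ends x = {a, b}" using edge_of_M by blast
      then have "x \<in> packed_edges Ts"
        using x crossing_final_classes_iff minimal_packing_packs_separating_edges[OF min] by blast
      then show "x \<in> (\<Union>l<\<tau>. {x\<in>Ts l. ?C x})" using x unfolding packed_edges_def by blast
    qed
  qed
  finally show ?thesis .
qed

lemma sum_card_minimal_packing_ge:
  assumes min: "minimal_packing Ts" and "V \<noteq> {}"
    and bound: "\<tau> * (card (final_classes Ts) - 1) \<le> card {x\<in>M. crossing ends (final_classes Ts) x}"
  shows "\<tau> * (card V - 1) \<le> (\<Sum>l<\<tau>. card (Ts l))"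
proof -
  let ?P = "final_classes Ts"
  have Ts: "forest_packing Ts" using min unfolding minimal_packing_def by simp
  have split: "card (Ts l) = (card V - card ?P) + card {x\<in>Ts l. crossing ends ?P x}"
    if l: "l < \<tau>" for l
  proof -
    have "Ts l \<subseteq> M" "finite (Ts l)"
      using Ts l finite_M unfolding forest_packing_def by (auto intro: rev_finite_subset)
    have "card (Ts l) = card ({x\<in>Ts l. \<not> crossing ends ?P x} \<union> {x\<in>Ts l. crossing ends ?P x})"
      by (rule arg_cong[where f=card]) auto
    also have "\<dots> = card {x\<in>Ts l. \<not> crossing ends ?P x} + card {x\<in>Ts l. crossing ends ?P x}"
      using \<open>finite (Ts l)\<close> by (intro card_Un_disjoint) auto
    finally show ?thesis
      using card_edges_inside_final[OF Ts l] edges_inside_final_classes[OF \<open>Ts l \<subseteq> M\<close>] by simp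
  qed
  have "card ?P \<ge> 1"
    using \<open>V \<noteq> {}\<close> finite_V unfolding final_classes_def by (simp add: Suc_leI card_gt_0_iff)
  have "card ?P \<le> card V" using finite_V unfolding final_classes_def by (rule card_image_le)
  have "(\<Sum>l<\<tau>. card (Ts l)) = \<tau> * (card V - card ?P) + card {x\<in>M. crossing ends ?P x}"
    using split sum_crossing_minimal_packing[OF min] by (simp add: sum.distrib)
  also have "\<dots> \<ge> \<tau> * (card V - card ?P) + \<tau> * (card ?P - 1)" using bound by simp
  also have "\<tau> * (card V - card ?P) + \<tau> * (card ?P - 1) = \<tau> * (card V - 1)"
    using \<open>card ?P \<ge> 1\<close> \<open>card ?P \<le> card V\<close> by (simp add: diff_mult_distrib2)
  finally show ?thesis .
qed

theorem partition_bound_imp_disjoint_spanning_trees: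
  assumes bound: "\<forall>P. is_partition V P \<longrightarrow> \<tau> * (card P - 1) \<le> card {x\<in>M. crossing ends P x}"
  shows "has_disjoint_spanning_trees \<tau> V ends M"
proof (cases "V = {}")
  case True
  then have "M = {}" using edge_of_M by blast
  then have "spanning_tree V ends M {}" using True
    unfolding spanning_tree_def graph_connected_def acyclic_edges_def by auto
  then show ?thesis unfolding has_disjoint_spanning_trees_def by (intro exI[of _ "\<lambda>_. {}"]) auto
next
  case False
  obtain Ts where min: "minimal_packing Ts" using minimal_packing_exists by blast
  then have Ts: "forest_packing Ts" unfolding minimal_packing_def by simp
  have TM: "Ts l \<subseteq> M" and "acyclic_edges ends (Ts l)" if "l < \<tau>" for l
    using Ts that unfolding forest_packing_def by auto
  then have forest:
    "Ts l \<subseteq> M" "acyclic_edges ends (Ts l)" "finite (Ts l)" "edges_within V ends (Ts l)"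
    if "l < \<tau>" for l
    using that finite_M edges_within_subset[OF edges_M] by (auto intro: rev_finite_subset)
  have less: "card (Ts l) < card V" if "l < \<tau>" for l
    using card_forest_less[OF finite_V False] forest[OF that] by blast
  have sum: "\<tau> * (card V - 1) \<le> (\<Sum>l<\<tau>. card (Ts l))"
    using sum_card_minimal_packing_ge[OF min False] bound final_classes_partition by blast
  have "Suc (card (Ts l)) = card V" if l: "l < \<tau>" for l
  proof (rule ccontr)
    assume "Suc (card (Ts l)) \<noteq> card V"
    then have "card (Ts l) < card V - 1" using less[OF l] by linarith
    moreover have "\<forall>k\<in>{..<\<tau>}. card (Ts k) \<le> card V - 1" using less by fastforce
    ultimately have "(\<Sum>l<\<tau>. card (Ts l)) < (\<Sum>l<\<tau>. card V - 1)"
      using l by (intro sum_strict_mono_ex1) auto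
    then show False using sum by simp
  qed
  then have "spanning_tree V ends M (Ts l)" if "l < \<tau>" for l
    using forest[OF that] forest_connected_if_card[OF finite_V] that
    unfolding spanning_tree_def by blast
  then show ?thesis
    using Ts unfolding has_disjoint_spanning_trees_def forest_packing_def by blast
qed

end

section \<open>The Nash-Williams--Tutte theorem\<close>

lemma finite_partition: "finite V \<Longrightarrow> is_partition V P \<Longrightarrow> finite P"
  unfolding is_partition_def by (metis finite_UnionD)

lemma parts_met_partition:
  assumes "is_partition V P" shows "parts_met V P = card P"
proof -
  have "B \<inter> V \<noteq> {}" if "B \<in> P" for B
    using assms that unfolding is_partition_def by (metis Int_absorb2 Sup_upper)
  then have "{B\<in>P. B \<inter> V \<noteq> {}} = P" by blast
  then show ?thesis unfolding parts_met_def by simp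
qed

lemma disjoint_spanning_trees_imp_partition_bound:
  assumes V: "finite V" and M: "finite M" "edges_within V ends M"
    and trees: "has_disjoint_spanning_trees \<tau> V ends M" and P: "is_partition V P"
  shows "\<tau> * (card P - 1) \<le> card {x\<in>M. crossing ends P x}"
proof (cases "V = {}")
  case True
  then have "P = {}" using P unfolding is_partition_def by auto
  then show ?thesis by simp
next
  case False
  let ?C = "crossing ends P"
  obtain Ts where tree: "\<And>l. l < \<tau> \<Longrightarrow> spanning_tree V ends M (Ts l)"
    and disj: "\<forall>k<\<tau>. \<forall>l<\<tau>. k \<noteq> l \<longrightarrow> Ts k \<inter> Ts l = {}"
    using trees unfolding has_disjoint_spanning_trees_def by blast
  have TM: "Ts l \<subseteq> M" if "l < \<tau>" for l using tree[OF that] unfolding spanning_tree_def by blast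
  then have fin: "finite (Ts l)" if "l < \<tau>" for l using M(1) that by (blast intro: rev_finite_subset)
  have "card P \<le> card {x\<in>Ts l. ?C x} + 1" if l: "l < \<tau>" for l
  proof -
    have "parts_met V P \<le> card {x\<in>Ts l. ?C x} + 1"
      using P tree[OF l] edges_within_subset[OF M(2) TM[OF l]]
      by (intro parts_met_le_crossing_edges[OF V False fin[OF l]])
        (auto simp: spanning_tree_def is_partition_def)
    then show ?thesis using parts_met_partition[OF P] by simp
  qed
  then have "(\<Sum>l<\<tau>. card P - 1) \<le> (\<Sum>l<\<tau>. card {x\<in>Ts l. ?C x})"
    by (intro sum_mono) (simp add: le_diff_conv)
  also have "\<dots> = card (\<Union>l<\<tau>. {x\<in>Ts l. ?C x})"
    using fin disj by (intro card_UN_disjoint[symmetric]) auto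
  also have "\<dots> \<le> card {x\<in>M. ?C x}"
    using M(1) TM by (intro card_mono) auto
  finally show ?thesis by simp
qed

theorem disjoint_spanning_trees_iff_partition_bound:
  assumes "finite V" "finite M" "edges_within V ends M"
  shows "has_disjoint_spanning_trees \<tau> V ends M \<longleftrightarrow>
    (\<forall>P. is_partition V P \<longrightarrow> \<tau> * (card P - 1) \<le> card {x\<in>M. crossing ends P x})"
proof
  assume bound: "\<forall>P. is_partition V P \<longrightarrow> \<tau> * (card P - 1) \<le> card {x\<in>M. crossing ends P x}"
  show "has_disjoint_spanning_trees \<tau> V ends M"
  proof (cases "\<tau> = 0")
    case True
    then show ?thesis unfolding has_disjoint_spanning_trees_def by simp
  next
    case False
    then interpret forest_packing_setup V ends M \<tau> using assms by unfold_locales auto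
    show ?thesis using bound by (rule partition_bound_imp_disjoint_spanning_trees)
  qed
next
  assume "has_disjoint_spanning_trees \<tau> V ends M"
  then show "\<forall>P. is_partition V P \<longrightarrow> \<tau> * (card P - 1) \<le> card {x\<in>M. crossing ends P x}"
    using assms disjoint_spanning_trees_imp_partition_bound by blast
qed

section \<open>Induced multigraphs of a hypergraph\<close>

lemma finite_simple_edges: "finite e \<Longrightarrow> finite (simple_edges e)"
  by (rule finite_subset[of _ "Pow e"]) (auto simp: simple_edges_def)

lemma edges_within_simple_edges: "E \<subseteq> simple_edges e \<Longrightarrow> e \<subseteq> W \<Longrightarrow> edges_within W id E"
  unfolding edges_within_def simple_edges_def by fastforce

lemma parts_met_le_crossing_simple_edges:
  assumes "finite e" "e \<noteq> {}" "e \<subseteq> V" "E \<subseteq> simple_edges e" "graph_connected e id E"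
    and "is_partition V P"
  shows "parts_met e P \<le> card {p\<in>E. crossing id P p} + 1"
  using assms edges_within_simple_edges[OF assms(4) order_refl]
    finite_subset[OF assms(4) finite_simple_edges[OF assms(1)]]
  by (intro parts_met_le_crossing_edges) (auto simp: is_partition_def)

text \<open>The induced graph realising the partition bound for a hyperedge \<open>e\<close>: inside each part met
  by \<open>e\<close> a star around a hub, and every hub joined to the root \<open>r \<in> e\<close>, which is the hub of its
  own part. Only the hub--root edges cross the partition.\<close>

definition part_hub :: "'v set \<Rightarrow> 'v \<Rightarrow> 'v set \<Rightarrow> 'v" where
  "part_hub e r B = (if r \<in> B then r else SOME v. v \<in> B \<inter> e)"

definition star_of_stars :: "'v set \<Rightarrow> 'v set set \<Rightarrow> 'v \<Rightarrow> 'v set set" where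
  "star_of_stars e P r =
     {{part_hub e r B, v} | B v. B \<in> P \<and> v \<in> B \<inter> e \<and> v \<noteq> part_hub e r B}
     \<union> (\<lambda>B. {r, part_hub e r B}) ` {B\<in>P. B \<inter> e \<noteq> {} \<and> r \<notin> B}"

lemma part_hub_mem:
  assumes "r \<in> e" "B \<inter> e \<noteq> {}" shows "part_hub e r B \<in> B \<inter> e"
proof (cases "r \<in> B")
  case False
  have "(SOME v. v \<in> B \<inter> e) \<in> B \<inter> e" using assms(2) by (rule some_in_eq[THEN iffD2])
  then show ?thesis using False unfolding part_hub_def by simp
qed (use assms in \<open>simp add: part_hub_def\<close>)

lemma star_of_stars_simple:
  assumes r: "r \<in> e" shows "star_of_stars e P r \<subseteq> simple_edges e"
proof
  fix p assume p: "p \<in> star_of_stars e P r"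
  show "p \<in> simple_edges e"
  proof (cases "p \<in> (\<lambda>B. {r, part_hub e r B}) ` {B\<in>P. B \<inter> e \<noteq> {} \<and> r \<notin> B}")
    case True
    then obtain B where B: "p = {r, part_hub e r B}" "B \<inter> e \<noteq> {}" "r \<notin> B" by auto
    then have "part_hub e r B \<in> B \<inter> e" using part_hub_mem[OF r] by simp
    then show ?thesis unfolding simple_edges_def using B r
      by (intro CollectI exI[of _ r] exI[of _ "part_hub e r B"]) auto
  next
    case False
    then obtain B v where B: "p = {part_hub e r B, v}" "v \<in> B \<inter> e" "v \<noteq> part_hub e r B"
      using p unfolding star_of_stars_def by auto
    then have "part_hub e r B \<in> e" using part_hub_mem[OF r] by auto
    then show ?thesis unfolding simple_edges_def using B
      by (intro CollectI exI[of _ "part_hub e r B"] exI[of _ v]) auto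
  qed
qed

lemma star_of_stars_connected:
  assumes r: "r \<in> e" and cover: "e \<subseteq> \<Union>P"
  shows "graph_connected e id (star_of_stars e P r)"
proof -
  let ?E = "star_of_stars e P r"
  have edge: "reachable id ?E u v" if "{u, v} \<in> ?E" for u v
    using reachable_edge[of "{u, v}" ?E id u v] that by simp
  have root: "reachable id ?E r u" if u: "u \<in> e" for u
  proof -
    obtain B where B: "B \<in> P" "u \<in> B" using cover u by auto
    let ?h = "part_hub e r B"
    have "reachable id ?E r ?h"
    proof (cases "r \<in> B")
      case False
      then show ?thesis using B u by (intro edge) (auto simp: star_of_stars_def)
    qed (simp add: part_hub_def)
    moreover have "reachable id ?E ?h u"
    proof (cases "u = ?h")
      case False
      then show ?thesis using B u by (intro edge) (auto simp: star_of_stars_def)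
    qed simp
    ultimately show ?thesis by (rule rtranclp_trans)
  qed
  have "reachable id ?E u v" if "u \<in> e" "v \<in> e" for u v
    using rtranclp_trans[OF reachable_sym[OF root[OF that(1)]] root[OF that(2)]] .
  moreover have "\<forall>x\<in>?E. id x \<subseteq> e" using star_of_stars_simple[OF r] unfolding simple_edges_def by auto
  ultimately show ?thesis unfolding graph_connected_def by blast
qed

lemma card_crossing_star_of_stars:
  assumes r: "r \<in> e" "r \<in> Br" "Br \<in> P" and finite: "finite P"
    and disj: "\<forall>A\<in>P. \<forall>B\<in>P. A \<noteq> B \<longrightarrow> A \<inter> B = {}"
  shows "card {p\<in>star_of_stars e P r. crossing id P p} \<le> parts_met e P - 1"
proof -
  let ?Q = "{B\<in>P. B \<inter> e \<noteq> {} \<and> r \<notin> B}"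
  have "{p\<in>star_of_stars e P r. crossing id P p} \<subseteq> (\<lambda>B. {r, part_hub e r B}) ` ?Q"
  proof
    fix p assume p: "p \<in> {p\<in>star_of_stars e P r. crossing id P p}"
    show "p \<in> (\<lambda>B. {r, part_hub e r B}) ` ?Q"
    proof (rule ccontr)
      assume "p \<notin> (\<lambda>B. {r, part_hub e r B}) ` ?Q"
      then obtain B v where "p = {part_hub e r B, v}" "B \<in> P" "v \<in> B \<inter> e"
        using p unfolding star_of_stars_def by blast
      moreover then have "part_hub e r B \<in> B" using part_hub_mem[OF r(1)] by blast
      ultimately show False using p unfolding crossing_def by auto
    qed
  qed
  then have "card {p\<in>star_of_stars e P r. crossing id P p} \<le> card ((\<lambda>B. {r, part_hub e r B}) ` ?Q)"
    using finite by (intro card_mono) auto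
  also have "\<dots> \<le> card ?Q" using finite by (intro card_image_le) auto
  also have "?Q = {B\<in>P. B \<inter> e \<noteq> {}} - {Br}" using r disj by blast
  also have "card \<dots> = parts_met e P - 1"
    unfolding parts_met_def using r finite by (subst card_Diff_singleton) auto
  finally show ?thesis .
qed

lemma exists_simple_graph_few_crossings:
  assumes "e \<noteq> {}" "e \<subseteq> V" "finite V" "is_partition V P"
  shows "\<exists>E. E \<subseteq> simple_edges e \<and> graph_connected e id E \<and> card {p\<in>E. crossing id P p} \<le> parts_met e P - 1"
proof -
  obtain r where r: "r \<in> e" using assms(1) by blast
  then obtain Br where Br: "r \<in> Br" "Br \<in> P" using assms(2,4) unfolding is_partition_def by blast
  have "finite P" using assms(3,4) by (rule finite_partition)
  show ?thesis
  proof (intro exI conjI)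
    show "star_of_stars e P r \<subseteq> simple_edges e" by (rule star_of_stars_simple[OF r])
    show "graph_connected e id (star_of_stars e P r)"
      using assms(2,4) by (intro star_of_stars_connected[OF r]) (auto simp: is_partition_def)
    show "card {p\<in>star_of_stars e P r. crossing id P p} \<le> parts_met e P - 1"
      using assms(4) by (intro card_crossing_star_of_stars[OF r Br \<open>finite P\<close>]) (auto simp: is_partition_def)
  qed
qed

lemma card_crossing_Sigma:
  assumes "finite I" "\<forall>i\<in>I. finite (Es i)"
  shows "card {x\<in>(SIGMA i:I. Es i). crossing snd P x} = (\<Sum>i\<in>I. card {p\<in>Es i. crossing id P p})"
proof -
  have "{x\<in>(SIGMA i:I. Es i). crossing snd P x} = (SIGMA i:I. {p\<in>Es i. crossing id P p})"
    unfolding crossing_def by auto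
  then show ?thesis using assms by simp
qed

lemma induced_multigraph:
  assumes "hypergraph V I f" "induced_choice I f Es"
  shows "\<forall>i\<in>I. finite (Es i)" "finite (SIGMA i:I. Es i)" "edges_within V snd (SIGMA i:I. Es i)"
proof -
  have sub: "Es i \<subseteq> simple_edges (f i)" "f i \<subseteq> V" "finite (f i)" if "i \<in> I" for i
    using assms that unfolding hypergraph_def induced_choice_def by (auto intro: rev_finite_subset)
  show fin: "\<forall>i\<in>I. finite (Es i)"
    using finite_subset[OF sub(1) finite_simple_edges[OF sub(3)]] by blast
  then show "finite (SIGMA i:I. Es i)" using assms(1) unfolding hypergraph_def by auto
  have "edges_within V id (Es i)" if "i \<in> I" for i
    using edges_within_simple_edges[OF sub(1,2)[OF that]] .
  then show "edges_within V snd (SIGMA i:I. Es i)" unfolding edges_within_def by auto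
qed

lemma parts_met_pos:
  assumes "hypergraph V I f" "is_partition V P" "i \<in> I"
  shows "parts_met (f i) P \<ge> 1"
proof -
  obtain v where "v \<in> f i" "v \<in> V" using assms(1,3) unfolding hypergraph_def by blast
  then obtain B where "B \<in> P" "v \<in> B" using assms(2) unfolding is_partition_def by blast
  then have "{B\<in>P. B \<inter> f i \<noteq> {}} \<noteq> {}" using \<open>v \<in> f i\<close> by blast
  moreover have "finite P" using assms(1,2) finite_partition unfolding hypergraph_def by blast
  ultimately show ?thesis unfolding parts_met_def by (simp add: Suc_leI card_gt_0_iff)
qed

lemma partition_bound_int_iff:
  assumes H: "hypergraph V I f" and P: "is_partition V P"
  shows "int \<tau> * (int (card P) - 1) \<le> (\<Sum>i\<in>I. int (parts_met (f i) P) - 1)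
     \<longleftrightarrow> \<tau> * (card P - 1) \<le> (\<Sum>i\<in>I. parts_met (f i) P - 1)"
proof -
  have sum: "(\<Sum>i\<in>I. int (parts_met (f i) P) - 1) = int (\<Sum>i\<in>I. parts_met (f i) P - 1)"
    using parts_met_pos[OF H P] by (simp add: of_nat_diff)
  show ?thesis
  proof (cases "V = {}")
    case True
    then have "I = {}" "P = {}" using H P unfolding hypergraph_def is_partition_def by auto
    then show ?thesis by simp
  next
    case False
    then have "P \<noteq> {}" using P unfolding is_partition_def by auto
    moreover have "finite P" using H P finite_partition unfolding hypergraph_def by blast
    ultimately have "card P \<ge> 1" by (simp add: Suc_leI card_gt_0_iff)
    then have "int \<tau> * (int (card P) - 1) = int (\<tau> * (card P - 1))" by (simp add: of_nat_diff)
    then show ?thesis unfolding sum by (simp only: of_nat_le_iff)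
  qed
qed

lemma inherently_connected_imp_partition_bound:
  assumes H: "hypergraph V I f" and conn: "inherently_connected \<tau> V I f" and P: "is_partition V P"
  shows "\<tau> * (card P - 1) \<le> (\<Sum>i\<in>I. parts_met (f i) P - 1)"
proof -
  have "\<forall>i\<in>I. \<exists>E. E \<subseteq> simple_edges (f i) \<and> graph_connected (f i) id E
      \<and> card {p\<in>E. crossing id P p} \<le> parts_met (f i) P - 1"
    using H P by (intro ballI exists_simple_graph_few_crossings) (auto simp: hypergraph_def)
  from bchoice[OF this] obtain Es where Es: "\<forall>i\<in>I. Es i \<subseteq> simple_edges (f i)
      \<and> graph_connected (f i) id (Es i) \<and> card {p\<in>Es i. crossing id P p} \<le> parts_met (f i) P - 1"
    by blast
  then have choice: "induced_choice I f Es" unfolding induced_choice_def by blast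
  note M = induced_multigraph[OF H choice]
  have "finite V" "finite I" using H unfolding hypergraph_def by auto
  have "has_disjoint_spanning_trees \<tau> V snd (SIGMA i:I. Es i)"
    using conn choice unfolding inherently_connected_def by blast
  then have "\<tau> * (card P - 1) \<le> card {x\<in>(SIGMA i:I. Es i). crossing snd P x}"
    using P by (intro disjoint_spanning_trees_imp_partition_bound[OF \<open>finite V\<close> M(2,3)])
  also have "\<dots> = (\<Sum>i\<in>I. card {p\<in>Es i. crossing id P p})"
    using \<open>finite I\<close> M(1) by (rule card_crossing_Sigma)
  also have "\<dots> \<le> (\<Sum>i\<in>I. parts_met (f i) P - 1)" using Es by (intro sum_mono) blast
  finally show ?thesis .
qed

lemma partition_bound_imp_inherently_connected:
  assumes H: "hypergraph V I f"
    and bound: "\<forall>P. is_partition V P \<longrightarrow> \<tau> * (card P - 1) \<le> (\<Sum>i\<in>I. parts_met (f i) P - 1)"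
  shows "inherently_connected \<tau> V I f"
  unfolding inherently_connected_def
proof (intro allI impI)
  fix Es assume choice: "induced_choice I f Es"
  note M = induced_multigraph[OF H choice]
  have "\<tau> * (card P - 1) \<le> card {x\<in>(SIGMA i:I. Es i). crossing snd P x}" if P: "is_partition V P" for P
  proof -
    have "parts_met (f i) P - 1 \<le> card {p\<in>Es i. crossing id P p}" if i: "i \<in> I" for i
    proof -
      have e: "finite (f i)" "f i \<noteq> {}" "f i \<subseteq> V"
        using H i unfolding hypergraph_def by (auto intro: rev_finite_subset)
      have E: "Es i \<subseteq> simple_edges (f i)" "graph_connected (f i) id (Es i)"
        using choice i unfolding induced_choice_def by auto
      show ?thesis using parts_met_le_crossing_simple_edges[OF e E P] by linarith
    qed
    then have "(\<Sum>i\<in>I. parts_met (f i) P - 1) \<le> (\<Sum>i\<in>I. card {p\<in>Es i. crossing id P p})"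
      by (rule sum_mono)
    also have "\<dots> = card {x\<in>(SIGMA i:I. Es i). crossing snd P x}"
      using H M(1) unfolding hypergraph_def by (intro card_crossing_Sigma[symmetric]) auto
    finally show ?thesis using bound P by (meson le_trans)
  qed
  then show "has_disjoint_spanning_trees \<tau> V snd (SIGMA i:I. Es i)"
    using disjoint_spanning_trees_iff_partition_bound[OF _ M(2,3)] H unfolding hypergraph_def by blast
qed

theorem theorem9:
  fixes \<tau> :: nat and V :: "'v set" and I :: "'i set" and f :: "'i \<Rightarrow> 'v set"
  assumes "\<tau> \<ge> 1" and "hypergraph V I f"
  shows "inherently_connected \<tau> V I f \<longleftrightarrow>
    (\<forall>P. is_partition V P \<longrightarrow>
       (\<Sum>i\<in>I. (int (parts_met (f i) P) - 1)) \<ge> int \<tau> * (int (card P) - 1))"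
  using inherently_connected_imp_partition_bound[OF assms(2)]
    partition_bound_imp_inherently_connected[OF assms(2)] partition_bound_int_iff[OF assms(2)]
  by blast

end
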